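(* For every nonempty caterpillar $S\subset\mathbb N$ and every $r\in\mathbb N$, \[ \{D\subset\delta(S): |D|=r\} = \{\delta(Y): Y\subset S,\ |Y|=r+1\}. \]
   Context: For $m\in\mathbb N$ let $d(m)$ be the finite set of integers with $m=\sum_{i\in d(m)}2^i$. For a finite $S\subset\mathbb N$ with $|S|\geq2$, $s(S)=\max\{i:\exists x,y\in S,\ i\in d(x)\setminus d(y)\}$ (the first splitting index); with $S_0=\{x\in S:s(S)\notin d(x)\}$, $S_1=\{x\in S:s(S)\in d(x)\}$, $(S_0,S_1)$ is the split of $S$. Caterpillars: the empty set and singletons are caterpillars; a finite $S$ with $|S|\geq 2$ and split $(S_0,S_1)$ is a caterpillar iff one of $S_0,S_1$ is a singleton and the other a caterpillar (every subset of a caterpillar is a caterpillar). For a caterpillar $S$, $\delta(S)=\{s(\{x,y\}):x,y\in S,\ x\neq y\}$. *)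

theory Defs
  imports Main
begin

definition d :: "nat \<Rightarrow> nat set" where
  "d m = {i. bit m i}"

text \<open>First splitting index of a finite set S with at least two elements.\<close>
definition s :: "nat set \<Rightarrow> nat" where
  "s S = Max {i. \<exists>x\<in>S. \<exists>y\<in>S. i \<in> d x - d y}"

definition split0 :: "nat set \<Rightarrow> nat set" where
  "split0 S = {x \<in> S. s S \<notin> d x}"

definition split1 :: "nat set \<Rightarrow> nat set" where
  "split1 S = {x \<in> S. s S \<in> d x}"

inductive caterpillar :: "nat set \<Rightarrow> bool" where
  cat_empty: "caterpillar {}"
| cat_single: "caterpillar {x}"
| cat_split: "\<lbrakk>finite S; card S \<ge> 2;
     (is_singleton (split0 S) \<and> caterpillar (split1 S)) \<or>
     (is_singleton (split1 S) \<and> caterpillar (split0 S))\<rbrakk> \<Longrightarrow> caterpillar S"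

definition delta :: "nat set \<Rightarrow> nat set" where
  "delta S = {s {x, y} | x y. x \<in> S \<and> y \<in> S \<and> x \<noteq> y}"

end

theory Submission
  imports Defs
begin

text \<open>
  If the split of a caterpillar S is ({a}, B), then every pair a, y with y in B splits first at
  the index t = s S, while pairs inside B split strictly below t. Hence adding a to a nonempty
  Y \<subseteq> B adds exactly one new element, t, to delta Y. Inducting along the caterpillar,
  nonempty Y \<subseteq> S satisfy |delta Y| = |Y| - 1, and every D \<subseteq> delta S is delta Y for some
  Y \<subseteq> S of size |D| + 1: drop t from D, realise the rest inside B, and add a back if t \<in> D.
\<close>

definition splitting_indices :: "nat set \<Rightarrow> nat set" where
  "splitting_indices S = {i. \<exists>x\<in>S. \<exists>y\<in>S. i \<in> d x - d y}"

lemma s_eq_Max_splitting_indices: "s S = Max (splitting_indices S)"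
  by (simp add: s_def splitting_indices_def)

lemma bit_nat_less: "bit (x::nat) i \<Longrightarrow> i < x"
proof -
  assume bit: "bit x i"
  have "\<not> x < 2 ^ i"
  proof
    assume "x < 2 ^ i"
    with bit show False by (simp add: bit_iff_odd)
  qed
  with less_exp[of i] show ?thesis by linarith
qed

lemma finite_d: "finite (d x)"
  by (rule finite_subset[of _ "{..<x}"]) (auto simp: d_def bit_nat_less)

lemma finite_splitting_indices: "finite S \<Longrightarrow> finite (splitting_indices S)"
  by (rule finite_subset[of _ "\<Union> (d ` S)"]) (auto simp: splitting_indices_def finite_d)

lemma splitting_indices_mono: "S \<subseteq> T \<Longrightarrow> splitting_indices S \<subseteq> splitting_indices T"
  by (auto simp: splitting_indices_def)

lemma splitting_indices_pair_nonempty: "(x::nat) \<noteq> y \<Longrightarrow> splitting_indices {x, y} \<noteq> {}"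
proof -
  assume "x \<noteq> y"
  then obtain n where "bit x n \<noteq> bit y n" using bit_eq_iff by blast
  then have "n \<in> splitting_indices {x, y}" by (auto simp: splitting_indices_def d_def)
  then show ?thesis by auto
qed

lemma s_pair_in_splitting_indices: "x \<noteq> y \<Longrightarrow> s {x, y} \<in> splitting_indices {x, y}"
  unfolding s_eq_Max_splitting_indices
  by (rule Max_in) (auto simp: finite_splitting_indices splitting_indices_pair_nonempty)

lemma s_pair_le:
  "\<lbrakk>finite S; x \<in> S; y \<in> S; x \<noteq> y\<rbrakk> \<Longrightarrow> s {x, y} \<le> s S"
  unfolding s_eq_Max_splitting_indices
  by (rule Max_mono[OF splitting_indices_mono splitting_indices_pair_nonempty
        finite_splitting_indices]) auto

lemma s_pair_across_split:
  assumes "finite S" "x \<in> split0 S" "y \<in> split1 S"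
  shows "s {x, y} = s S"
proof -
  have "x \<noteq> y" "x \<in> S" "y \<in> S" using assms by (auto simp: split0_def split1_def)
  have "s S \<in> splitting_indices {x, y}"
    using assms by (auto simp: splitting_indices_def split0_def split1_def)
  then have "s S \<le> s {x, y}"
    unfolding s_eq_Max_splitting_indices[of "{x, y}"]
    by (simp add: finite_splitting_indices)
  with s_pair_le[OF \<open>finite S\<close> \<open>x \<in> S\<close> \<open>y \<in> S\<close> \<open>x \<noteq> y\<close>] show ?thesis by simp
qed

lemma s_pair_within_split:
  assumes "finite S" "x \<in> S" "y \<in> S" "x \<noteq> y" "s S \<in> d x \<longleftrightarrow> s S \<in> d y"
  shows "s {x, y} < s S"
proof -
  have "s {x, y} \<noteq> s S"
    using s_pair_in_splitting_indices[OF \<open>x \<noteq> y\<close>] assms(5)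
    by (auto simp: splitting_indices_def)
  with s_pair_le[OF assms(1-4)] show ?thesis by simp
qed

lemma delta_split0_less_s: "finite S \<Longrightarrow> delta (split0 S) \<subseteq> {..<s S}"
  by (auto simp: delta_def split0_def intro!: s_pair_within_split)

lemma delta_split1_less_s: "finite S \<Longrightarrow> delta (split1 S) \<subseteq> {..<s S}"
  by (auto simp: delta_def split1_def intro!: s_pair_within_split)

lemma finite_delta: "finite Y \<Longrightarrow> finite (delta Y)"
proof -
  assume "finite Y"
  have "delta Y \<subseteq> (\<lambda>(x, y). s {x, y}) ` (Y \<times> Y)" by (auto simp: delta_def)
  with \<open>finite Y\<close> show ?thesis by (meson finite_SigmaI finite_imageI finite_subset)
qed

lemma delta_mono: "Y \<subseteq> S \<Longrightarrow> delta Y \<subseteq> delta S"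
  by (auto simp: delta_def)

lemma delta_singleton [simp]: "delta {x} = {}"
  by (simp add: delta_def)

lemma delta_insert:
  assumes "Y \<noteq> {}" "\<forall>y\<in>Y. s {a, y} = t" "a \<notin> Y"
  shows "delta (insert a Y) = insert t (delta Y)"
proof -
  have "s {x, y} = t" if "x \<in> insert a Y" "y \<in> insert a Y" "x \<noteq> y" "x = a \<or> y = a" for x y
    using that assms(2) by (auto simp: insert_commute)
  moreover obtain y where "y \<in> Y" "a \<noteq> y" using assms(1,3) by auto
  ultimately show ?thesis
    unfolding delta_def using assms(2) by (auto 4 4)
qed

lemma delta_insert_attached:
  assumes "finite B" "Y \<subseteq> B" "Y \<noteq> {}" "a \<notin> B"
    and "\<forall>y\<in>B. s {a, y} = t" "delta B \<subseteq> {..<t}"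
  shows "delta (insert a Y) = insert t (delta Y)"
    and "card (delta (insert a Y)) = Suc (card (delta Y))"
proof -
  show eq: "delta (insert a Y) = insert t (delta Y)"
    using assms by (intro delta_insert) auto
  have "t \<notin> delta Y" using delta_mono[OF \<open>Y \<subseteq> B\<close>] \<open>delta B \<subseteq> {..<t}\<close> by auto
  moreover have "finite (delta Y)" using assms(1,2) by (meson finite_delta finite_subset)
  ultimately show "card (delta (insert a Y)) = Suc (card (delta Y))" by (simp add: eq)
qed

lemma caterpillar_finite: "caterpillar S \<Longrightarrow> finite S"
  by (induction rule: caterpillar.induct) auto

lemma caterpillar_induct [consumes 2, case_names singleton attach]:
  assumes "caterpillar S" "S \<noteq> {}"
    and singleton: "\<And>x. P {x}"
    and attach: "\<And>a B t. \<lbrakk>finite B; B \<noteq> {}; a \<notin> B; \<forall>y\<in>B. s {a, y} = t;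
                   delta B \<subseteq> {..<t}; P B\<rbrakk> \<Longrightarrow> P (insert a B)"
  shows "P S"
  using assms(1,2)
proof (induction rule: caterpillar.induct)
  case cat_empty
  then show ?case by simp
next
  case (cat_single x)
  show ?case by (rule singleton)
next
  case (cat_split S)
  have attach_split: "P S"
    if "is_singleton A" "B \<noteq> {} \<Longrightarrow> P B" "S = A \<union> B" "A \<inter> B = {}"
      and "\<forall>x\<in>A. \<forall>y\<in>B. s {x, y} = s S" "delta B \<subseteq> {..<s S}" for A B
  proof -
    obtain a where "A = {a}" using \<open>is_singleton A\<close> by (auto simp: is_singleton_def)
    have "B \<noteq> {}" using \<open>card S \<ge> 2\<close> \<open>S = A \<union> B\<close> \<open>A = {a}\<close> by auto
    moreover have "finite B" using \<open>finite S\<close> \<open>S = A \<union> B\<close> by simp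
    ultimately have "P (insert a B)"
      using that \<open>A = {a}\<close> by (intro attach) auto
    then show ?thesis using \<open>S = A \<union> B\<close> \<open>A = {a}\<close> by simp
  qed
  have partition: "S = split0 S \<union> split1 S" "split0 S \<inter> split1 S = {}"
    by (auto simp: split0_def split1_def)
  have across: "s {x, y} = s S" if "x \<in> split0 S" "y \<in> split1 S" for x y
    using s_pair_across_split[OF \<open>finite S\<close> that] .
  have across': "s {y, x} = s S" if "x \<in> split0 S" "y \<in> split1 S" for x y
    using across[OF that] by (simp add: insert_commute)
  from cat_split.IH show ?case
  proof
    assume "is_singleton (split0 S) \<and> caterpillar (split1 S) \<and> (split1 S \<noteq> {} \<longrightarrow> P (split1 S))"
    then show ?thesis
      using partition across delta_split1_less_s[OF \<open>finite S\<close>] by (intro attach_split) auto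
  next
    assume "is_singleton (split1 S) \<and> caterpillar (split0 S) \<and> (split0 S \<noteq> {} \<longrightarrow> P (split0 S))"
    then show ?thesis
      using partition across' delta_split0_less_s[OF \<open>finite S\<close>]
      by (intro attach_split) auto
  qed
qed

lemma card_delta_caterpillar_subset:
  assumes "caterpillar S" "Y \<subseteq> S" "Y \<noteq> {}"
  shows "card (delta Y) = card Y - 1"
proof -
  have "S \<noteq> {}" using assms(2,3) by auto
  with assms(1) show ?thesis
    using assms(2,3)
  proof (induction arbitrary: Y rule: caterpillar_induct)
    case (singleton x)
    then have "Y = {x}" by (meson subset_singletonD)
    then show ?case by simp
  next
    case (attach a B t Y)
    show ?case
    proof (cases "a \<in> Y")
      case False
      then have "Y \<subseteq> B" using attach.prems(1) by blast
      then show ?thesis using attach.IH attach.prems(2) by blast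
    next
      case True
      define Y' where "Y' = Y - {a}"
      have "Y' \<subseteq> B" "a \<notin> Y'" "Y = insert a Y'"
        using attach.prems(1) True by (auto simp: Y'_def)
      have "finite Y'" using \<open>Y' \<subseteq> B\<close> attach(1) by (rule finite_subset)
      show ?thesis
      proof (cases "Y' = {}")
        case True
        then show ?thesis using \<open>Y = insert a Y'\<close> by simp
      next
        case False
        have "card (delta Y) = Suc (card (delta Y'))"
          using delta_insert_attached(2)[OF attach(1) \<open>Y' \<subseteq> B\<close> False attach(3-5)]
          by (simp add: \<open>Y = insert a Y'\<close>)
        also have "\<dots> = card Y'"
          using attach.IH[OF \<open>Y' \<subseteq> B\<close> False] \<open>finite Y'\<close> False
          by (simp add: card_gt_0_iff)
        finally show ?thesis using \<open>finite Y'\<close> \<open>a \<notin> Y'\<close> \<open>Y = insert a Y'\<close> by simp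
      qed
    qed
  qed
qed

lemma delta_subset_realised:
  assumes "caterpillar S" "S \<noteq> {}" "D \<subseteq> delta S"
  shows "\<exists>Y\<subseteq>S. card Y = card D + 1 \<and> delta Y = D"
  using assms
proof (induction arbitrary: D rule: caterpillar_induct)
  case (singleton x)
  then have "D = {}" by simp
  then show ?case by (intro exI[of _ "{x}"]) simp
next
  case (attach a B t D)
  have "D \<subseteq> insert t (delta B)"
    using attach.prems delta_insert_attached(1)[OF attach(1) order_refl attach(2-5)] by simp
  show ?case
  proof (cases "t \<in> D")
    case False
    with \<open>D \<subseteq> insert t (delta B)\<close> have "D \<subseteq> delta B" by blast
    from attach.IH[OF this]
    obtain Y where "Y \<subseteq> B" "card Y = card D + 1" "delta Y = D" by blast
    then show ?thesis by (intro exI[of _ Y]) auto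
  next
    case True
    have "D - {t} \<subseteq> delta B" using \<open>D \<subseteq> insert t (delta B)\<close> by blast
    from attach.IH[OF this]
    obtain Y where Y: "Y \<subseteq> B" "card Y = card (D - {t}) + 1" "delta Y = D - {t}" by blast
    have "Y \<noteq> {}" using Y(2) by auto
    have "finite Y" using Y(1) attach(1) by (rule finite_subset)
    have "a \<notin> Y" using Y(1) attach(3) by blast
    have "finite D"
      using attach.prems finite_delta[of "insert a B"] attach(1) by (simp add: finite_subset)
    have "delta (insert a Y) = insert t (D - {t})"
      using delta_insert_attached(1)[OF attach(1) Y(1) \<open>Y \<noteq> {}\<close> attach(3-5)] Y(3) by simp
    also have "\<dots> = D" using True by (rule insert_Diff)
    finally have "delta (insert a Y) = D" .
    moreover have "card (insert a Y) = card D + 1"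
      using Y(2) \<open>finite Y\<close> \<open>a \<notin> Y\<close> card_Suc_Diff1[OF \<open>finite D\<close> True] by simp
    ultimately show ?thesis using Y(1) by blast
  qed
qed

theorem mainTheorem6:
  fixes S :: "nat set" and r :: nat
  assumes "caterpillar S" and "S \<noteq> {}"
  shows "{D. D \<subseteq> delta S \<and> finite D \<and> card D = r}
         = {delta Y | Y. Y \<subseteq> S \<and> finite Y \<and> card Y = r + 1}"
proof (intro equalityI subsetI)
  fix D assume "D \<in> {D. D \<subseteq> delta S \<and> finite D \<and> card D = r}"
  then have "D \<subseteq> delta S" "card D = r" by simp_all
  then obtain Y where Y: "Y \<subseteq> S" "card Y = r + 1" "delta Y = D"
    using delta_subset_realised[OF assms] by blast
  moreover have "finite Y"
    using caterpillar_finite[OF assms(1)] Y(1) by (rule finite_subset[rotated])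
  ultimately show "D \<in> {delta Y | Y. Y \<subseteq> S \<and> finite Y \<and> card Y = r + 1}"
    by blast
next
  fix D assume "D \<in> {delta Y | Y. Y \<subseteq> S \<and> finite Y \<and> card Y = r + 1}"
  then obtain Y where Y: "D = delta Y" "Y \<subseteq> S" "finite Y" "card Y = r + 1" by blast
  have "Y \<noteq> {}" using Y(4) by auto
  then have "card D = r"
    using card_delta_caterpillar_subset[OF assms(1) Y(2)] Y(1,4) by simp
  moreover have "D \<subseteq> delta S" using Y(1,2) by (simp add: delta_mono)
  moreover have "finite D" using Y(1,3) by (simp add: finite_delta)
  ultimately show "D \<in> {D. D \<subseteq> delta S \<and> finite D \<and> card D = r}" by blast
qed

end
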